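(* Let $G$ be a finite simple connected graph with adjacency matrix $A$ having eigenvalues $\mu_1\ge\mu_2\ge\cdots\ge\mu_n$, and suppose $\mu_2(A)>0$. Let $g$ be the multiplicity of the smallest eigenvalue $\mu_n(A)$. Then \[ \chi_q(G)\ \ge\ 1+\min\left\{g,\ \frac{|\mu_n(A)|}{\mu_2(A)}\right\}. \]
   Context: A quantum $c$-coloring of a graph $G=(V,E)$ is a collection of orthogonal projectors $\{P_{v,k}: v\in V, k\in[c]\}$ in $\mathbb{C}^{d\times d}$, for some integer $d>0$, such that $\sum_{k\in[c]}P_{v,k}=I_d$ for every vertex $v\in V$, and $P_{v,k}P_{w,k}=0_d$ for every edge $vw\in E$ and every $k\in[c]$. The quantum chromatic number $\chi_q(G)$ is the smallest $c$ for which $G$ admits a quantum $c$-coloring in some dimension $d>0$. *)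

theory Defs
  imports "Jordan_Normal_Form.Schur_Decomposition"
begin

definition simple_graph :: "nat \<Rightarrow> (nat \<Rightarrow> nat \<Rightarrow> bool) \<Rightarrow> bool" where
  "simple_graph n E \<longleftrightarrow>
     (\<forall>u v. E u v \<longrightarrow> u < n \<and> v < n) \<and>
     (\<forall>u v. E u v \<longrightarrow> E v u) \<and> (\<forall>v. \<not> E v v)"

definition connected_graph :: "nat \<Rightarrow> (nat \<Rightarrow> nat \<Rightarrow> bool) \<Rightarrow> bool" where
  "connected_graph n E \<longleftrightarrow> n \<ge> 1 \<and> (\<forall>u<n. \<forall>v<n. E\<^sup>*\<^sup>* u v)"

definition adj_matrix :: "nat \<Rightarrow> (nat \<Rightarrow> nat \<Rightarrow> bool) \<Rightarrow> real mat" where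
  "adj_matrix n E = mat n n (\<lambda>(i,j). if E i j then 1 else 0)"

definition eigenvalue_list :: "real mat \<Rightarrow> real list" where
  "eigenvalue_list A = (THE mus. length mus = dim_row A \<and> sorted_wrt (\<ge>) mus \<and>
      char_poly A = prod_list (map (\<lambda>mu. [:- mu, 1:]) mus))"

definition orth_projector :: "nat \<Rightarrow> complex mat \<Rightarrow> bool" where
  "orth_projector d P \<longleftrightarrow> P \<in> carrier_mat d d \<and> P * P = P \<and> mat_adjoint P = P"

definition quantum_coloring ::
  "nat \<Rightarrow> (nat \<Rightarrow> nat \<Rightarrow> bool) \<Rightarrow> nat \<Rightarrow> nat \<Rightarrow> (nat \<Rightarrow> nat \<Rightarrow> complex mat) \<Rightarrow> bool" where
  "quantum_coloring n E c d P \<longleftrightarrow>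
     (\<forall>v<n. \<forall>k<c. orth_projector d (P v k)) \<and>
     (\<forall>v<n. \<forall>i<d. \<forall>j<d. (\<Sum>k<c. P v k $$ (i,j)) = (if i = j then 1 else 0)) \<and>
     (\<forall>v w k. E v w \<longrightarrow> k < c \<longrightarrow> P v k * P w k = 0\<^sub>m d d)"

definition quantum_colorable :: "nat \<Rightarrow> (nat \<Rightarrow> nat \<Rightarrow> bool) \<Rightarrow> nat \<Rightarrow> bool" where
  "quantum_colorable n E c \<longleftrightarrow> (\<exists>d>0. \<exists>P. quantum_coloring n E c d P)"

definition quantum_chromatic_number :: "nat \<Rightarrow> (nat \<Rightarrow> nat \<Rightarrow> bool) \<Rightarrow> nat" where
  "quantum_chromatic_number n E = (LEAST c. quantum_colorable n E c)"

end

(* Write the adjacency matrix as A = U diag(mu) U^T with mu_1 >= ... >= mu_n.  Given a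
   quantum c-colouring P_(v,k) in dimension d, let S_(v,j) = sum_k omega^(jk) P_(v,k), where
   omega is a primitive c-th root of unity.  For vectors X_v in C^d put Y_j(v) = S_(v,j) X_v.
   Orthogonality of the characters k -> omega^(jk) gives
     sum_j <Y_j(v), Y_j(w)> = c sum_k <X_v, P_(v,k) P_(w,k) X_w>,
   which vanishes for adjacent v, w and equals c |X_v|^2 for v = w; moreover Y_0 = X.
   Hence sum_j <Y_j, (A (x) I) Y_j> = 0 and sum_j |Y_j|^2 = c |X|^2.
   If the eigenspace of mu_n has dimension g > c - 1, counting dimensions yields a nonzero X,
   with every coordinate in that eigenspace, such that Y_1, ..., Y_(c-1) are orthogonal to a
   top eigenvector.  Then 0 <= mu_n |X|^2 + mu_2 (c - 1) |X|^2, i.e. c >= 1 + |mu_n| / mu_2;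
   otherwise c >= 1 + g. *)

theory Submission
  imports Defs "HOL-Combinatorics.List_Permutation"
begin

section \<open>Orthonormal bases\<close>

lemma homogeneous_system_nontrivial_solution:
  fixes M :: "'j \<Rightarrow> 'i \<Rightarrow> 'a::field"
  assumes "finite I" "finite J" "card J < card I"
  shows "\<exists>\<alpha>. (\<exists>i\<in>I. \<alpha> i \<noteq> 0) \<and> (\<forall>j\<in>J. (\<Sum>i\<in>I. M j i * \<alpha> i) = 0)"
  using assms
proof (induction "card J" arbitrary: J I M)
  case 0
  then have "J = {}" by auto
  from 0 obtain i0 where "i0 \<in> I" by (metis card.empty card_ge_0_finite ex_in_conv less_irrefl_nat)
  then show ?case using \<open>J = {}\<close> by (intro exI[of _ "\<lambda>i. if i = i0 then 1 else 0"]) auto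
next
  case (Suc k)
  then obtain j0 where j0: "j0 \<in> J" by (metis card.empty ex_in_conv nat.distinct(1))
  define J' where "J' = J - {j0}"
  have cJ': "card J' = k" using Suc j0 by (simp add: J'_def)
  have fJ': "finite J'" using Suc by (simp add: J'_def)
  show ?case
  proof (cases "\<forall>i\<in>I. M j0 i = 0")
    case True
    from Suc.hyps(1)[OF cJ'[symmetric] Suc.prems(1) fJ'] cJ' Suc.prems(3) Suc.hyps(2)
    obtain \<alpha> where "\<exists>i\<in>I. \<alpha> i \<noteq> 0" "\<forall>j\<in>J'. (\<Sum>i\<in>I. M j i * \<alpha> i) = 0"
      by (metis Suc_lessD)
    then show ?thesis using True by (intro exI[of _ \<alpha>]) (auto simp: J'_def)
  next
    case False
    text \<open>Eliminate the unknown i0 using equation j0 and solve the smaller system.\<close>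
    then obtain i0 where i0: "i0 \<in> I" "M j0 i0 \<noteq> 0" by auto
    define I' where "I' = I - {i0}"
    define M' where "M' = (\<lambda>j i. M j i - M j i0 * M j0 i / M j0 i0)"
    have "card J' < card I'" using i0 Suc cJ' by (simp add: I'_def)
    from Suc.hyps(1)[OF cJ'[symmetric] _ fJ' this, of M'] Suc.prems(1)
    obtain \<beta> where \<beta>: "\<exists>i\<in>I'. \<beta> i \<noteq> 0" "\<forall>j\<in>J'. (\<Sum>i\<in>I'. M' j i * \<beta> i) = 0"
      by (auto simp: I'_def)
    define \<alpha> where "\<alpha> = \<beta>(i0 := - (\<Sum>i\<in>I'. M j0 i * \<beta> i) / M j0 i0)"
    have "(\<Sum>i\<in>I'. M j i * \<alpha> i) = (\<Sum>i\<in>I'. M j i * \<beta> i)" for j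
      by (intro sum.cong) (auto simp: \<alpha>_def I'_def)
    then have sum_split: "(\<Sum>i\<in>I. M j i * \<alpha> i) = M j i0 * \<alpha> i0 + (\<Sum>i\<in>I'. M j i * \<beta> i)" for j
      using Suc.prems(1) i0(1) unfolding I'_def by (simp add: sum.remove)
    have "(\<Sum>i\<in>I. M j i * \<alpha> i) = 0" if "j \<in> J" for j
    proof (cases "j = j0")
      case True
      then show ?thesis using i0 by (simp only: sum_split) (simp add: \<alpha>_def)
    next
      case False
      then have "(\<Sum>i\<in>I'. M' j i * \<beta> i) = 0" using \<beta>(2) that by (auto simp: J'_def)
      moreover have "(\<Sum>i\<in>I'. M' j i * \<beta> i)
          = (\<Sum>i\<in>I'. M j i * \<beta> i) - M j i0 / M j0 i0 * (\<Sum>i\<in>I'. M j0 i * \<beta> i)"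
        by (simp add: M'_def sum_subtractf sum_distrib_left algebra_simps)
      ultimately show ?thesis using i0 unfolding sum_split by (simp add: \<alpha>_def field_simps)
    qed
    moreover have "\<exists>i\<in>I. \<alpha> i \<noteq> 0" using \<beta>(1) by (auto simp: \<alpha>_def I'_def)
    ultimately show ?thesis by blast
  qed
qed

lemma normalize_real_vector:
  fixes x :: "nat \<Rightarrow> real"
  assumes "i < n" "x i \<noteq> 0"
  obtains s where "(\<Sum>v<n. (s * x v) * (s * x v)) = 1"
proof -
  define N where "N = (\<Sum>v<n. x v * x v)"
  have "x i * x i > 0"
    using assms(2) not_real_square_gt_zero by blast
  then have "N > 0"
    unfolding N_def using assms(1) by (intro sum_pos2[of _ i]) auto
  then have "(\<Sum>v<n. (x v / sqrt N) * (x v / sqrt N)) = 1"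
    by (simp add: N_def sum_divide_distrib[symmetric])
  then show thesis using that[of "1 / sqrt N"] by simp
qed

definition orthonormal_columns :: "nat \<Rightarrow> nat \<Rightarrow> (nat \<Rightarrow> nat \<Rightarrow> real) \<Rightarrow> bool" where
  "orthonormal_columns n m W \<longleftrightarrow>
     (\<forall>k<m. \<forall>l<m. (\<Sum>v<n. W v k * W v l) = (if k = l then 1 else 0))"

lemma orthonormal_columns_extend:
  assumes W: "orthonormal_columns n m W" and "m < n"
  obtains x where "orthonormal_columns n (Suc m) (\<lambda>v k. if k = m then x v else W v k)"
proof -
  obtain \<alpha> :: "nat \<Rightarrow> real" where \<alpha>: "\<exists>v<n. \<alpha> v \<noteq> 0" "\<forall>k<m. (\<Sum>v<n. W v k * \<alpha> v) = 0"
    using homogeneous_system_nontrivial_solution[of "{..<n}" "{..<m}" "\<lambda>k v. W v k"] \<open>m < n\<close>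
    by auto
  then obtain s where unit: "(\<Sum>v<n. (s * \<alpha> v) * (s * \<alpha> v)) = 1"
    using normalize_real_vector by blast
  have "(\<Sum>v<n. W v k * (s * \<alpha> v)) = s * (\<Sum>v<n. W v k * \<alpha> v)"
    "(\<Sum>v<n. (s * \<alpha> v) * W v k) = s * (\<Sum>v<n. W v k * \<alpha> v)" for k
    by (simp_all add: sum_distrib_left mult_ac)
  then have "(\<Sum>v<n. W v k * (s * \<alpha> v)) = 0" "(\<Sum>v<n. (s * \<alpha> v) * W v k) = 0"
    if "k < m" for k
    using \<alpha>(2) that by simp_all
  then have "orthonormal_columns n (Suc m) (\<lambda>v k. if k = m then s * \<alpha> v else W v k)"
    using W unit unfolding orthonormal_columns_def by (auto simp: less_Suc_eq)
  then show thesis by (rule that)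
qed

lemma orthonormal_basis_with_first_column:
  assumes "n > 0" "(\<Sum>v<n. x v * x v) = 1"
  obtains W where "orthonormal_columns n n W" "\<forall>v. W v 0 = x v"
proof -
  have "\<exists>W. orthonormal_columns n (Suc k) W \<and> (\<forall>v. W v 0 = x v)" if "k < n" for k
    using that
  proof (induction k)
    case 0
    have "orthonormal_columns n 1 (\<lambda>v k. x v)"
      using assms(2) by (simp add: orthonormal_columns_def)
    then show ?case by auto
  next
    case (Suc m)
    then obtain W where W: "orthonormal_columns n (Suc m) W" "\<forall>v. W v 0 = x v" by auto
    obtain y where "orthonormal_columns n (Suc (Suc m)) (\<lambda>v k. if k = Suc m then y v else W v k)"
      using orthonormal_columns_extend[OF W(1)] Suc.prems by blast
    then show ?case using W(2) by (intro exI[of _ "\<lambda>v k. if k = Suc m then y v else W v k"]) auto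
  qed
  from this[of "n - 1"] assms(1) that show thesis by auto
qed

definition orthogonal_matrix :: "nat \<Rightarrow> real mat \<Rightarrow> bool" where
  "orthogonal_matrix n U \<longleftrightarrow>
     U \<in> carrier_mat n n \<and> transpose_mat U * U = 1\<^sub>m n \<and> U * transpose_mat U = 1\<^sub>m n"

lemma orthogonal_matrixI:
  assumes "U \<in> carrier_mat n n" "transpose_mat U * U = 1\<^sub>m n"
  shows "orthogonal_matrix n U"
  using assms mat_mult_left_right_inverse[of "transpose_mat U" n U]
  unfolding orthogonal_matrix_def by auto

lemma orthogonal_matrix_mult:
  assumes U: "orthogonal_matrix n U" and V: "orthogonal_matrix n V"
  shows "orthogonal_matrix n (U * V)"
proof (rule orthogonal_matrixI)
  have carr: "U \<in> carrier_mat n n" "V \<in> carrier_mat n n"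
    using U V by (auto simp: orthogonal_matrix_def)
  then show "U * V \<in> carrier_mat n n" by simp
  have "transpose_mat (U * V) * (U * V) = transpose_mat V * (transpose_mat U * U) * V"
    using carr by (simp add: transpose_mult assoc_mult_mat[of _ n n _ n _ n])
  then show "transpose_mat (U * V) * (U * V) = 1\<^sub>m n"
    using U V carr by (simp add: orthogonal_matrix_def)
qed

lemma orthogonal_matrix_entries:
  assumes "orthogonal_matrix n U" "k < n" "l < n"
  shows "(\<Sum>v<n. U $$ (v,k) * U $$ (v,l)) = (if k = l then 1 else 0)"
    and "(\<Sum>v<n. U $$ (k,v) * U $$ (l,v)) = (if k = l then 1 else 0)"
proof -
  have "U \<in> carrier_mat n n" "transpose_mat U * U = 1\<^sub>m n" "U * transpose_mat U = 1\<^sub>m n"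
    using assms(1) by (auto simp: orthogonal_matrix_def)
  then have "(transpose_mat U * U) $$ (k,l) = (if k = l then 1 else 0)"
    "(U * transpose_mat U) $$ (k,l) = (if k = l then 1 else 0)"
    using assms(2,3) by simp_all
  then show "(\<Sum>v<n. U $$ (v,k) * U $$ (v,l)) = (if k = l then 1 else 0)"
    "(\<Sum>v<n. U $$ (k,v) * U $$ (l,v)) = (if k = l then 1 else 0)"
    using assms(2,3) \<open>U \<in> carrier_mat n n\<close>
    by (simp_all add: scalar_prod_def atLeast0LessThan)
qed

lemma orthogonal_matrix_with_first_column:
  assumes "n > 0" "(\<Sum>v<n. x v * x v) = 1"
  obtains W where "orthogonal_matrix n W" "\<forall>v<n. W $$ (v,0) = x v"
proof -
  obtain W where W: "orthonormal_columns n n W" "\<forall>v. W v 0 = x v"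
    using orthonormal_basis_with_first_column[OF assms] by blast
  have "orthogonal_matrix n (mat n n (\<lambda>(v,k). W v k))"
    using W(1) by (intro orthogonal_matrixI eq_matI)
      (auto simp: orthonormal_columns_def scalar_prod_def atLeast0LessThan)
  then show thesis using that W(2) assms(1) by simp
qed

section \<open>The spectral theorem for real symmetric matrices\<close>

lemma index_mult_mat_sum:
  assumes "A \<in> carrier_mat n m" "B \<in> carrier_mat m p" "i < n" "j < p"
  shows "(A * B) $$ (i,j) = (\<Sum>k<m. A $$ (i,k) * B $$ (k,j))"
  using assms by (simp add: scalar_prod_def atLeast0LessThan)

lemma symmetric_eigenvalue_real:
  fixes A :: "nat \<Rightarrow> nat \<Rightarrow> real" and z :: "nat \<Rightarrow> complex"
  assumes sym: "\<forall>i<n. \<forall>j<n. A i j = A j i"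
    and eigen: "\<forall>i<n. (\<Sum>j<n. of_real (A i j) * z j) = e * z i"
    and nonzero: "i < n" "z i \<noteq> 0"
  shows "Im e = 0"
proof -
  define S where "S = (\<Sum>i<n. cnj (z i) * (\<Sum>j<n. of_real (A i j) * z j))"
  have "S = (\<Sum>i<n. cnj (z i) * (e * z i))"
    unfolding S_def using eigen by (intro sum.cong refl) auto
  also have "\<dots> = (\<Sum>i<n. e * of_real ((cmod (z i))\<^sup>2))"
    by (intro sum.cong refl) (subst complex_norm_square, simp add: algebra_simps)
  finally have S_eq: "S = e * of_real (\<Sum>i<n. (cmod (z i))\<^sup>2)"
    by (simp add: sum_distrib_left)
  text \<open>The form is hermitian, so S is real.\<close>
  have "cnj S = (\<Sum>i<n. \<Sum>j<n. of_real (A i j) * (z i * cnj (z j)))"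
    unfolding S_def by (simp add: sum_distrib_left mult_ac)
  also have "\<dots> = (\<Sum>j<n. \<Sum>i<n. of_real (A i j) * (z i * cnj (z j)))"
    by (rule sum.swap)
  also have "\<dots> = (\<Sum>j<n. \<Sum>i<n. of_real (A j i) * (z i * cnj (z j)))"
    using sym by (intro sum.cong refl) auto
  also have "\<dots> = S"
    unfolding S_def by (simp add: sum_distrib_left mult_ac)
  finally have "Im (cnj S) = Im S" by simp
  then have "Im S = 0" by simp
  moreover have "(\<Sum>i<n. (cmod (z i))\<^sup>2) > 0"
    using nonzero by (intro sum_pos2[of _ i]) auto
  ultimately show ?thesis by (simp add: S_eq)
qed

lemma real_matrix_complex_eigenvector:
  fixes A :: "real mat"
  assumes A: "A \<in> carrier_mat n n" and "n > 0"
  obtains e z i where "i < n" "z i \<noteq> 0"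
    "\<forall>i<n. (\<Sum>j<n. complex_of_real (A $$ (i,j)) * z j) = e * z i"
proof -
  define M where "M = map_mat complex_of_real A"
  have M: "M \<in> carrier_mat n n" using A by (simp add: M_def)
  obtain as where as: "char_poly M = (\<Prod>a\<leftarrow>as. [:- a, 1:])" "length as = n"
    using char_poly_factorized[OF M] by auto
  then obtain e where "e \<in> set as" using \<open>n > 0\<close> by (cases as) auto
  then have "poly (char_poly M) e = 0" unfolding as(1) by (simp add: poly_prod_list_zero_iff)
  then have "eigenvalue M e" using eigenvalue_root_char_poly[OF M] by simp
  then obtain v where "eigenvector M v e" using find_eigenvector[OF M] by blast
  then have v: "v \<in> carrier_vec n" "v \<noteq> 0\<^sub>v n" "M *\<^sub>v v = e \<cdot>\<^sub>v v"
    unfolding eigenvector_def using M by auto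
  have "\<exists>i<n. v $ i \<noteq> 0"
  proof (rule ccontr)
    assume "\<not> ?thesis"
    then have "v = 0\<^sub>v n" using v(1) by (intro eq_vecI) auto
    with v(2) show False by simp
  qed
  then obtain i where "i < n" "v $ i \<noteq> 0" by blast
  moreover have "\<forall>i<n. (\<Sum>j<n. of_real (A $$ (i,j)) * v $ j) = e * v $ i"
  proof (intro allI impI)
    fix i assume "i < n"
    then show "(\<Sum>j<n. of_real (A $$ (i,j)) * v $ j) = e * v $ i"
      using arg_cong[OF v(3), of "\<lambda>w. w $ i"] v(1) A
      by (simp add: M_def scalar_prod_def atLeast0LessThan)
  qed
  ultimately show thesis using that[of i "\<lambda>j. v $ j" e] by blast
qed

lemma symmetric_matrix_real_eigenvector:
  fixes A :: "real mat"
  assumes A: "A \<in> carrier_mat n n" and sym: "transpose_mat A = A" and "n > 0"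
  obtains e x i where "i < n" "x i \<noteq> 0" "\<forall>i<n. (\<Sum>j<n. A $$ (i,j) * x j) = e * x i"
proof -
  obtain e v i where i: "i < n" "v i \<noteq> 0"
    and eigen: "\<forall>i<n. (\<Sum>j<n. complex_of_real (A $$ (i,j)) * v j) = e * v i"
    by (rule real_matrix_complex_eigenvector[OF A \<open>n > 0\<close>])
  have "\<forall>i<n. \<forall>j<n. A $$ (i,j) = A $$ (j,i)"
  proof (intro allI impI)
    fix i j assume "i < n" "j < n"
    then show "A $$ (i,j) = A $$ (j,i)" using A arg_cong[OF sym, of "\<lambda>M. M $$ (j,i)"] by simp
  qed
  then have "Im e = 0" using symmetric_eigenvalue_real[OF _ eigen i] by blast
  text \<open>Real and imaginary parts of v are real eigenvectors; one of them is nonzero.\<close>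
  have Re_eigen: "\<forall>i<n. (\<Sum>j<n. A $$ (i,j) * Re (v j)) = Re e * Re (v i)"
    and Im_eigen: "\<forall>i<n. (\<Sum>j<n. A $$ (i,j) * Im (v j)) = Re e * Im (v i)"
  proof (safe)
    fix i assume "i < n"
    then have "Re (\<Sum>j<n. of_real (A $$ (i,j)) * v j) = Re (e * v i)"
      "Im (\<Sum>j<n. of_real (A $$ (i,j)) * v j) = Im (e * v i)"
      using eigen by simp_all
    then show "(\<Sum>j<n. A $$ (i,j) * Re (v j)) = Re e * Re (v i)"
      "(\<Sum>j<n. A $$ (i,j) * Im (v j)) = Re e * Im (v i)"
      using \<open>Im e = 0\<close> by (simp_all add: Re_sum Im_sum)
  qed
  consider "Re (v i) \<noteq> 0" | "Im (v i) \<noteq> 0" using i(2) complex_eq_iff by auto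
  then show thesis
  proof cases
    case 1
    then show thesis using that[of i "\<lambda>j. Re (v j)"] i(1) Re_eigen by blast
  next
    case 2
    then show thesis using that[of i "\<lambda>j. Im (v j)"] i(1) Im_eigen by blast
  qed
qed

lemma block_diag_mult:
  assumes "A1 \<in> carrier_mat k k" "A2 \<in> carrier_mat m m" "B1 \<in> carrier_mat k k" "B2 \<in> carrier_mat m m"
  shows "four_block_mat A1 (0\<^sub>m k m) (0\<^sub>m m k) A2 * four_block_mat B1 (0\<^sub>m k m) (0\<^sub>m m k) B2
    = four_block_mat (A1 * B1) (0\<^sub>m k m) (0\<^sub>m m k) (A2 * B2)"
  by (subst mult_four_block_mat[OF assms(1) zero_carrier_mat[of k m] zero_carrier_mat[of m k] assms(2)
      assms(3) zero_carrier_mat[of k m] zero_carrier_mat[of m k] assms(4)])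
    (use assms in auto)

lemma block_diag_transpose:
  assumes "A1 \<in> carrier_mat k k" "A2 \<in> carrier_mat m m"
  shows "transpose_mat (four_block_mat A1 (0\<^sub>m k m) (0\<^sub>m m k) A2)
    = four_block_mat (transpose_mat A1) (0\<^sub>m k m) (0\<^sub>m m k) (transpose_mat A2)"
  using transpose_four_block_mat[OF assms(1) zero_carrier_mat zero_carrier_mat assms(2)] by simp

lemma orthogonal_matrix_block:
  assumes "orthogonal_matrix m U"
  shows "orthogonal_matrix (Suc m) (four_block_mat (1\<^sub>m 1) (0\<^sub>m 1 m) (0\<^sub>m m 1) U)"
proof (rule orthogonal_matrixI)
  have U: "U \<in> carrier_mat m m" "transpose_mat U * U = 1\<^sub>m m"
    using assms by (auto simp: orthogonal_matrix_def)
  then show "four_block_mat (1\<^sub>m 1) (0\<^sub>m 1 m) (0\<^sub>m m 1) U \<in> carrier_mat (Suc m) (Suc m)"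
    by auto
  show "transpose_mat (four_block_mat (1\<^sub>m 1) (0\<^sub>m 1 m) (0\<^sub>m m 1) U)
      * four_block_mat (1\<^sub>m 1) (0\<^sub>m 1 m) (0\<^sub>m m 1) U = 1\<^sub>m (Suc m)"
    using U by (simp add: block_diag_transpose block_diag_mult)
qed

lemma four_block_first_row_col:
  assumes A: "A \<in> carrier_mat (Suc m) (Suc m)"
    and col: "\<And>i. i < Suc m \<Longrightarrow> A $$ (i,0) = (if i = 0 then e else 0)"
    and row: "\<And>j. j < Suc m \<Longrightarrow> A $$ (0,j) = (if j = 0 then e else 0)"
  shows "A = four_block_mat (mat 1 1 (\<lambda>_. e)) (0\<^sub>m 1 m) (0\<^sub>m m 1)
    (mat m m (\<lambda>(i,j). A $$ (Suc i, Suc j)))"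
proof (rule eq_matI)
  fix i j
  assume "i < dim_row (four_block_mat (mat 1 1 (\<lambda>_. e)) (0\<^sub>m 1 m) (0\<^sub>m m 1)
      (mat m m (\<lambda>(i,j). A $$ (Suc i, Suc j))))"
    and "j < dim_col (four_block_mat (mat 1 1 (\<lambda>_. e)) (0\<^sub>m 1 m) (0\<^sub>m m 1)
      (mat m m (\<lambda>(i,j). A $$ (Suc i, Suc j))))"
  then have "i < Suc m" "j < Suc m" by simp_all
  then show "A $$ (i,j) = four_block_mat (mat 1 1 (\<lambda>_. e)) (0\<^sub>m 1 m) (0\<^sub>m m 1)
      (mat m m (\<lambda>(i,j). A $$ (Suc i, Suc j))) $$ (i,j)"
    using col row by (cases i; cases j) simp_all
qed (use A in simp_all)

lemma symmetric_deflation: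
  fixes A W :: "real mat"
  assumes A: "A \<in> carrier_mat (Suc m) (Suc m)" and sym: "transpose_mat A = A"
    and W: "orthogonal_matrix (Suc m) W"
    and eigen: "\<forall>i<Suc m. (\<Sum>j<Suc m. A $$ (i,j) * W $$ (j,0)) = e * W $$ (i,0)"
  obtains B where "B \<in> carrier_mat m m" "transpose_mat B = B"
    "transpose_mat W * A * W = four_block_mat (mat 1 1 (\<lambda>_. e)) (0\<^sub>m 1 m) (0\<^sub>m m 1) B"
proof -
  define A' where "A' = transpose_mat W * A * W"
  have Wc: "W \<in> carrier_mat (Suc m) (Suc m)" using W by (simp add: orthogonal_matrix_def)
  have A': "A' \<in> carrier_mat (Suc m) (Suc m)" using A Wc by (simp add: A'_def)
  have "transpose_mat A' = transpose_mat W * transpose_mat (transpose_mat W * A)"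
    unfolding A'_def using A Wc by (intro transpose_mult) auto
  also have "transpose_mat (transpose_mat W * A) = transpose_mat A * W"
    using A Wc transpose_mult[of "transpose_mat W" "Suc m" "Suc m" A "Suc m"] by simp
  finally have A'_sym: "transpose_mat A' = A'"
    using A Wc sym by (simp add: A'_def assoc_mult_mat[of _ "Suc m" "Suc m" _ "Suc m" _ "Suc m"])
  have AW: "(A * W) $$ (v,0) = e * W $$ (v,0)" if "v < Suc m" for v
  proof -
    have "(A * W) $$ (v,0) = (\<Sum>j<Suc m. A $$ (v,j) * W $$ (j,0))"
      by (rule index_mult_mat_sum[OF A Wc that zero_less_Suc])
    then show ?thesis using eigen that by simp
  qed
  have col0: "A' $$ (i,0) = (if i = 0 then e else 0)" if "i < Suc m" for i
  proof -
    have "A' = transpose_mat W * (A * W)" using A Wc by (simp add: A'_def assoc_mult_mat)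
    then have "A' $$ (i,0) = (\<Sum>v<Suc m. transpose_mat W $$ (i,v) * (A * W) $$ (v,0))"
      using A Wc that by (simp only: index_mult_mat_sum[of _ "Suc m" "Suc m" _ "Suc m"] transpose_carrier_mat
          mult_carrier_mat zero_less_Suc)
    also have "\<dots> = e * (\<Sum>v<Suc m. W $$ (v,i) * W $$ (v,0))"
      unfolding sum_distrib_left using Wc that AW by (intro sum.cong refl) simp
    also have "\<dots> = (if i = 0 then e else 0)"
      using orthogonal_matrix_entries(1)[OF W that zero_less_Suc] by simp
    finally show ?thesis .
  qed
  have row0: "A' $$ (0,j) = (if j = 0 then e else 0)" if "j < Suc m" for j
    using col0[OF that] that A' A'_sym by (metis carrier_matD index_transpose_mat(1) zero_less_Suc)
  define B where "B = mat m m (\<lambda>(i,j). A' $$ (Suc i, Suc j))"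
  have B: "B \<in> carrier_mat m m" by (simp add: B_def)
  have B_sym: "transpose_mat B = B"
  proof (rule eq_matI)
    fix i j assume "i < dim_row B" "j < dim_col B"
    then show "transpose_mat B $$ (i,j) = B $$ (i,j)"
      using A' arg_cong[OF A'_sym, of "\<lambda>M. M $$ (Suc i, Suc j)"] by (simp add: B_def)
  qed (simp_all add: B_def)
  have A'_block: "A' = four_block_mat (mat 1 1 (\<lambda>_. e)) (0\<^sub>m 1 m) (0\<^sub>m m 1) B"
    unfolding B_def by (rule four_block_first_row_col[OF A' col0 row0])
  show thesis by (rule that[OF B B_sym A'_block[unfolded A'_def]])
qed

theorem real_symmetric_spectral_decomposition:
  fixes A :: "real mat"
  assumes "A \<in> carrier_mat n n" "transpose_mat A = A"
  shows "\<exists>U D. orthogonal_matrix n U \<and> D \<in> carrier_mat n n \<and> diagonal_mat D \<and>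
    A = U * D * transpose_mat U"
  using assms
proof (induction n arbitrary: A)
  case 0
  then show ?case
    by (intro exI[of _ "1\<^sub>m 0"] exI[of _ A]) (auto simp: diagonal_mat_def orthogonal_matrix_def)
next
  case (Suc m)
  obtain e x i where x: "i < Suc m" "x i \<noteq> 0" "\<forall>i<Suc m. (\<Sum>j<Suc m. A $$ (i,j) * x j) = e * x i"
    by (rule symmetric_matrix_real_eigenvector[OF Suc.prems zero_less_Suc])
  obtain s where unit: "(\<Sum>v<Suc m. (s * x v) * (s * x v)) = 1"
    by (rule normalize_real_vector[where x = x, OF x(1,2)])
  obtain W where W: "orthogonal_matrix (Suc m) W" "\<forall>v<Suc m. W $$ (v,0) = s * x v"
    by (rule orthogonal_matrix_with_first_column[OF zero_less_Suc unit])
  have eigen: "\<forall>i<Suc m. (\<Sum>j<Suc m. A $$ (i,j) * W $$ (j,0)) = e * W $$ (i,0)"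
    using x(3) W(2) by (simp add: mult.left_commute sum_distrib_left[symmetric])
  obtain B where B: "B \<in> carrier_mat m m" "transpose_mat B = B"
    and A': "transpose_mat W * A * W = four_block_mat (mat 1 1 (\<lambda>_. e)) (0\<^sub>m 1 m) (0\<^sub>m m 1) B"
    by (rule symmetric_deflation[OF Suc.prems(1,2) W(1) eigen])
  obtain U D where UD: "orthogonal_matrix m U" "D \<in> carrier_mat m m" "diagonal_mat D"
    "B = U * D * transpose_mat U"
    using Suc.IH[OF B] by blast
  have U: "U \<in> carrier_mat m m" using UD(1) by (simp add: orthogonal_matrix_def)
  define V where "V = four_block_mat (1\<^sub>m 1) (0\<^sub>m 1 m) (0\<^sub>m m 1) U"
  define D' where "D' = four_block_mat (mat 1 1 (\<lambda>_. e)) (0\<^sub>m 1 m) (0\<^sub>m m 1) D"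
  have V: "orthogonal_matrix (Suc m) V" unfolding V_def by (rule orthogonal_matrix_block[OF UD(1)])
  have D': "D' \<in> carrier_mat (Suc m) (Suc m)" "diagonal_mat D'"
    using UD(2,3) by (auto simp: D'_def diagonal_mat_def four_block_mat_def)
  have conj: "transpose_mat W * A * W = V * D' * transpose_mat V"
    using U UD(2) by (simp add: A' UD(4) V_def D'_def block_diag_mult block_diag_transpose)
  have Wc: "W \<in> carrier_mat (Suc m) (Suc m)" and Vc: "V \<in> carrier_mat (Suc m) (Suc m)"
    using W(1) V by (simp_all add: orthogonal_matrix_def)
  have "A = (W * transpose_mat W) * A * (W * transpose_mat W)"
    using W(1) Suc.prems(1) by (simp add: orthogonal_matrix_def)
  also have "\<dots> = W * (transpose_mat W * A * W) * transpose_mat W"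
    using Wc Suc.prems(1) by (simp add: assoc_mult_mat[of _ "Suc m" "Suc m" _ "Suc m" _ "Suc m"])
  also have "\<dots> = (W * V) * D' * transpose_mat (W * V)"
    unfolding conj using Wc Vc D'(1)
    by (simp add: transpose_mult assoc_mult_mat[of _ "Suc m" "Suc m" _ "Suc m" _ "Suc m"])
  finally have "A = (W * V) * D' * transpose_mat (W * V)" .
  then show ?case using orthogonal_matrix_mult[OF W(1) V] D' by blast
qed

section \<open>Sorted eigenvalue lists\<close>

lemma order_prod_linear_factors:
  fixes xs :: "'a::idom list"
  shows "order a (\<Prod>x\<leftarrow>xs. [:- x, 1:]) = count (mset xs) a"
proof (induction xs)
  case (Cons x xs)
  have "order a ([:- x, 1:] * (\<Prod>x\<leftarrow>xs. [:- x, 1:]))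
      = order a [:- x, 1:] + order a (\<Prod>x\<leftarrow>xs. [:- x, 1:])"
    by (intro order_mult no_zero_divisors) (auto simp: prod_list_zero_iff)
  moreover have "order a [:- x, 1:] = (if x = a then 1 else 0)"
    using order_linear_power[of a "- x" 1] by auto
  ultimately show ?case using Cons.IH by simp
qed simp

lemma linear_factors_mset_eq:
  fixes xs ys :: "'a::idom list"
  assumes "(\<Prod>x\<leftarrow>xs. [:- x, 1:]) = (\<Prod>x\<leftarrow>ys. [:- x, 1:])"
  shows "mset xs = mset ys"
proof (rule multiset_eqI)
  fix a
  show "count (mset xs) a = count (mset ys) a"
    using arg_cong[OF assms, of "order a"] by (simp add: order_prod_linear_factors)
qed

lemma prod_list_map_mset_eq:
  fixes f :: "'a \<Rightarrow> 'b::comm_monoid_mult"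
  assumes "mset xs = mset ys"
  shows "prod_list (map f xs) = prod_list (map f ys)"
proof -
  have "prod_mset (mset (map f xs)) = prod_mset (mset (map f ys))" using assms by simp
  then show ?thesis by (simp only: prod_mset_prod_list)
qed

lemma eigenvalue_list_eqI:
  assumes "A \<in> carrier_mat n n" "char_poly A = (\<Prod>x\<leftarrow>xs. [:- x, 1:])" "length xs = n"
  shows "eigenvalue_list A = rev (sort xs)"
  unfolding eigenvalue_list_def
proof (rule the_equality)
  show "length (rev (sort xs)) = dim_row A \<and> sorted_wrt (\<ge>) (rev (sort xs)) \<and>
      char_poly A = (\<Prod>x\<leftarrow>rev (sort xs). [:- x, 1:])"
    using assms prod_list_map_mset_eq[of xs "rev (sort xs)"] by (simp add: sorted_wrt_rev)
next
  fix mus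
  assume "length mus = dim_row A \<and> sorted_wrt (\<ge>) mus \<and> char_poly A = (\<Prod>x\<leftarrow>mus. [:- x, 1:])"
  then have "mset (rev mus) = mset xs" "sorted (rev mus)"
    using assms(2) linear_factors_mset_eq[of mus xs] by (auto simp: sorted_wrt_rev)
  then have "sort xs = rev mus" by (rule properties_for_sort)
  then show "mus = rev (sort xs)" by simp
qed

lemma orthogonal_matrix_permute_columns:
  assumes U: "orthogonal_matrix n U" and f: "bij_betw f {..<n} {..<n}"
  shows "orthogonal_matrix n (mat n n (\<lambda>(v,k). U $$ (v, f k)))"
proof (rule orthogonal_matrixI)
  have "f k < n" if "k < n" for k using f that by (auto simp: bij_betw_def)
  moreover have "f k = f l \<longleftrightarrow> k = l" if "k < n" "l < n" for k l
    using f that by (auto simp: bij_betw_def inj_on_def)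
  ultimately show "transpose_mat (mat n n (\<lambda>(v,k). U $$ (v, f k))) * mat n n (\<lambda>(v,k). U $$ (v, f k))
      = 1\<^sub>m n"
    using orthogonal_matrix_entries(1)[OF U]
    by (intro eq_matI) (auto simp: scalar_prod_def atLeast0LessThan)
qed simp

lemma diagonal_conjugation_entry:
  assumes U: "U \<in> carrier_mat n n" and D: "D \<in> carrier_mat n n" "diagonal_mat D"
    and "v < n" "w < n"
  shows "(U * D * transpose_mat U) $$ (v,w) = (\<Sum>k<n. U $$ (v,k) * D $$ (k,k) * U $$ (w,k))"
proof -
  have UD: "(U * D) $$ (v,k) = U $$ (v,k) * D $$ (k,k)" if "k < n" for k
  proof -
    have "(U * D) $$ (v,k) = (\<Sum>j<n. U $$ (v,j) * D $$ (j,k))"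
      by (rule index_mult_mat_sum[OF U D(1) \<open>v < n\<close> that])
    also have "\<dots> = (\<Sum>j<n. if j = k then U $$ (v,j) * D $$ (j,k) else 0)"
      using D that by (intro sum.cong refl) (auto simp: diagonal_mat_def)
    finally show ?thesis using that by simp
  qed
  have "(U * D * transpose_mat U) $$ (v,w) = (\<Sum>k<n. (U * D) $$ (v,k) * transpose_mat U $$ (k,w))"
    using U D assms(4,5) by (intro index_mult_mat_sum) auto
  then show ?thesis using U UD \<open>w < n\<close> by simp
qed

theorem symmetric_eigenvalue_list:
  fixes A :: "real mat"
  assumes A: "A \<in> carrier_mat n n" and sym: "transpose_mat A = A"
  shows "length (eigenvalue_list A) = n" and "sorted_wrt (\<ge>) (eigenvalue_list A)"
    and "\<exists>U. orthogonal_matrix n U \<and>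
      (\<forall>v<n. \<forall>w<n. A $$ (v,w) = (\<Sum>k<n. U $$ (v,k) * eigenvalue_list A ! k * U $$ (w,k)))"
proof -
  obtain U D where UD: "orthogonal_matrix n U" "D \<in> carrier_mat n n" "diagonal_mat D"
    "A = U * D * transpose_mat U"
    using real_symmetric_spectral_decomposition[OF A sym] by blast
  have U: "U \<in> carrier_mat n n" using UD(1) by (simp add: orthogonal_matrix_def)
  define ds where "ds = diag_mat D"
  have ds: "length ds = n" "\<forall>k<n. ds ! k = D $$ (k,k)"
    using UD(2) by (auto simp: ds_def diag_mat_def)
  have similar: "similar_mat A D"
    unfolding similar_mat_def similar_mat_wit_def using UD U
    by (intro exI[of _ U] exI[of _ "transpose_mat U"]) (auto simp: Let_def orthogonal_matrix_def)
  have "char_poly D = (\<Prod>x\<leftarrow>ds. [:- x, 1:])"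
    unfolding ds_def using UD(2,3)
    by (intro char_poly_upper_triangular) (auto simp: upper_triangular_def diagonal_mat_def)
  then have "char_poly A = (\<Prod>x\<leftarrow>ds. [:- x, 1:])" using char_poly_similar[OF similar] by simp
  then have eigenvalues: "eigenvalue_list A = rev (sort ds)" by (rule eigenvalue_list_eqI[OF A _ ds(1)])
  then show "length (eigenvalue_list A) = n" "sorted_wrt (\<ge>) (eigenvalue_list A)"
    using ds(1) by (simp_all add: sorted_wrt_rev)
  obtain f where f: "bij_betw f {..<n} {..<n}" "\<forall>k<n. eigenvalue_list A ! k = ds ! f k"
    using permutation_Ex_bij[of "eigenvalue_list A" ds] eigenvalues ds(1) by auto
  have f_less: "f k < n" if "k < n" for k using f(1) that by (auto simp: bij_betw_def)
  define U' where "U' = mat n n (\<lambda>(v,k). U $$ (v, f k))"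
  have "A $$ (v,w) = (\<Sum>k<n. U' $$ (v,k) * eigenvalue_list A ! k * U' $$ (w,k))"
    if "v < n" "w < n" for v w
  proof -
    have "A $$ (v,w) = (\<Sum>k<n. U $$ (v,k) * D $$ (k,k) * U $$ (w,k))"
      using diagonal_conjugation_entry[OF U UD(2,3) that] UD(4) by simp
    also have "\<dots> = (\<Sum>k<n. U $$ (v,f k) * D $$ (f k,f k) * U $$ (w,f k))"
      using sum.reindex_bij_betw[OF f(1), of "\<lambda>k. U $$ (v,k) * D $$ (k,k) * U $$ (w,k)"] by simp
    also have "\<dots> = (\<Sum>k<n. U' $$ (v,k) * eigenvalue_list A ! k * U' $$ (w,k))"
      using f(2) ds(2) f_less that by (intro sum.cong refl) (auto simp: U'_def)
    finally show ?thesis .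
  qed
  then show "\<exists>U. orthogonal_matrix n U \<and>
      (\<forall>v<n. \<forall>w<n. A $$ (v,w) = (\<Sum>k<n. U $$ (v,k) * eigenvalue_list A ! k * U $$ (w,k)))"
    using orthogonal_matrix_permute_columns[OF UD(1) f(1)] unfolding U'_def by blast
qed

section \<open>Quadratic forms in an eigenbasis\<close>

definition eigen_coord :: "nat \<Rightarrow> real mat \<Rightarrow> (nat \<Rightarrow> complex) \<Rightarrow> nat \<Rightarrow> complex" where
  "eigen_coord n U z k = (\<Sum>v<n. of_real (U $$ (v,k)) * z v)"

lemma cnj_mult_self: "cnj z * z = complex_of_real ((cmod z)\<^sup>2)"
  by (subst complex_norm_square) (simp add: mult.commute)

lemma quadratic_form_eigen_expansion:
  fixes M :: "nat \<Rightarrow> nat \<Rightarrow> real" and \<mu> :: "nat \<Rightarrow> real" and z :: "nat \<Rightarrow> complex"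
  assumes spec: "\<forall>v<n. \<forall>w<n. M v w = (\<Sum>k<n. U $$ (v,k) * \<mu> k * U $$ (w,k))"
  shows "(\<Sum>v<n. \<Sum>w<n. of_real (M v w) * (cnj (z v) * z w))
    = of_real (\<Sum>k<n. \<mu> k * (cmod (eigen_coord n U z k))\<^sup>2)"
proof -
  have "(\<Sum>v<n. \<Sum>w<n. of_real (M v w) * (cnj (z v) * z w))
      = (\<Sum>v<n. \<Sum>w<n. \<Sum>k<n. of_real (\<mu> k) *
          ((of_real (U $$ (v,k)) * cnj (z v)) * (of_real (U $$ (w,k)) * z w)))"
  proof (intro sum.cong refl)
    fix v w assume "v \<in> {..<n}" "w \<in> {..<n}"
    then have "of_real (M v w) = (\<Sum>k<n. of_real (U $$ (v,k) * \<mu> k * U $$ (w,k)) :: complex)"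
      using spec by (simp add: of_real_sum)
    then show "of_real (M v w) * (cnj (z v) * z w) = (\<Sum>k<n. of_real (\<mu> k) *
        ((of_real (U $$ (v,k)) * cnj (z v)) * (of_real (U $$ (w,k)) * z w)))"
      by (simp add: sum_distrib_left sum_distrib_right mult_ac)
  qed
  also have "\<dots> = (\<Sum>k<n. \<Sum>v<n. \<Sum>w<n. of_real (\<mu> k) *
          ((of_real (U $$ (v,k)) * cnj (z v)) * (of_real (U $$ (w,k)) * z w)))"
    by (subst sum.swap) (rule sum.cong[OF refl], rule sum.swap)
  also have "\<dots> = (\<Sum>k<n. of_real (\<mu> k) *
      ((\<Sum>v<n. of_real (U $$ (v,k)) * cnj (z v)) * (\<Sum>w<n. of_real (U $$ (w,k)) * z w)))"
    unfolding sum_product by (simp only: sum_distrib_left)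
  also have "\<dots> = (\<Sum>k<n. of_real (\<mu> k) * (cnj (eigen_coord n U z k) * eigen_coord n U z k))"
    unfolding eigen_coord_def by (simp add: cnj_sum)
  also have "\<dots> = of_real (\<Sum>k<n. \<mu> k * (cmod (eigen_coord n U z k))\<^sup>2)"
    by (simp add: cnj_mult_self of_real_sum)
  finally show ?thesis .
qed

lemma norm_eigen_expansion:
  assumes U: "orthogonal_matrix n U"
  shows "(\<Sum>v<n. cnj (z v) * z v) = of_real (\<Sum>k<n. (cmod (eigen_coord n U z k))\<^sup>2)"
proof -
  have "\<forall>v<n. \<forall>w<n. (if v = w then 1 else 0) = (\<Sum>k<n. U $$ (v,k) * 1 * U $$ (w,k))"
    using orthogonal_matrix_entries(2)[OF U] by simp
  from quadratic_form_eigen_expansion[OF this, of z]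
  have "(\<Sum>v<n. \<Sum>w<n. of_real (if v = w then 1 else 0) * (cnj (z v) * z w))
      = of_real (\<Sum>k<n. (cmod (eigen_coord n U z k))\<^sup>2)" by simp
  moreover have "(\<Sum>w<n. of_real (if v = w then 1 else 0) * (cnj (z v) * z w)) = cnj (z v) * z v"
    if "v < n" for v
  proof -
    have "(\<Sum>w<n. of_real (if v = w then 1 else 0) * (cnj (z v) * z w))
        = (\<Sum>w<n. if v = w then cnj (z v) * z w else 0)"
      by (intro sum.cong refl) simp
    then show ?thesis using that by simp
  qed
  ultimately show ?thesis by simp
qed

lemma eigen_coord_eigen_combination:
  assumes U: "orthogonal_matrix n U" and T: "T \<subseteq> {..<n}" and k: "k < n"
  shows "eigen_coord n U (\<lambda>v. \<Sum>t\<in>T. \<beta> t * of_real (U $$ (v,t))) k = (if k \<in> T then \<beta> k else 0)"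
proof -
  have "eigen_coord n U (\<lambda>v. \<Sum>t\<in>T. \<beta> t * of_real (U $$ (v,t))) k
      = (\<Sum>v<n. \<Sum>t\<in>T. \<beta> t * of_real (U $$ (v,k) * U $$ (v,t)))"
    unfolding eigen_coord_def by (simp add: sum_distrib_left mult_ac)
  also have "\<dots> = (\<Sum>t\<in>T. \<beta> t * of_real (\<Sum>v<n. U $$ (v,k) * U $$ (v,t)))"
    by (subst sum.swap) (simp add: sum_distrib_left of_real_sum)
  also have "\<dots> = (\<Sum>t\<in>T. if k = t then \<beta> t else 0)"
  proof (intro sum.cong refl)
    fix t assume "t \<in> T"
    then have "t < n" using T by auto
    then show "\<beta> t * of_real (\<Sum>v<n. U $$ (v,k) * U $$ (v,t)) = (if k = t then \<beta> t else 0)"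
      using orthogonal_matrix_entries(1)[OF U k] by simp
  qed
  also have "\<dots> = (if k \<in> T then \<beta> k else 0)"
    using finite_subset[OF T] by (simp add: sum.delta)
  finally show ?thesis .
qed

text \<open>For a family Z v i (vertex v < n, coordinate i < d) these are the quadratic forms of
  M \<otimes> I_d and of the identity at Z, written in the eigenbasis of M = U diag(\<mu>) U^T.\<close>
definition eigen_energy ::
  "nat \<Rightarrow> nat \<Rightarrow> real mat \<Rightarrow> (nat \<Rightarrow> real) \<Rightarrow> (nat \<Rightarrow> nat \<Rightarrow> complex) \<Rightarrow> real" where
  "eigen_energy n d U \<mu> Z = (\<Sum>i<d. \<Sum>k<n. \<mu> k * (cmod (eigen_coord n U (\<lambda>v. Z v i) k))\<^sup>2)"

definition eigen_norm2 :: "nat \<Rightarrow> nat \<Rightarrow> real mat \<Rightarrow> (nat \<Rightarrow> nat \<Rightarrow> complex) \<Rightarrow> real" where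
  "eigen_norm2 n d U Z = (\<Sum>i<d. \<Sum>k<n. (cmod (eigen_coord n U (\<lambda>v. Z v i) k))\<^sup>2)"

lemma eigen_energy_norm2_cong:
  assumes "\<And>v i. v < n \<Longrightarrow> i < d \<Longrightarrow> Z v i = Z' v i"
  shows "eigen_energy n d U \<mu> Z = eigen_energy n d U \<mu> Z'"
    and "eigen_norm2 n d U Z = eigen_norm2 n d U Z'"
proof -
  have "eigen_coord n U (\<lambda>v. Z v i) = eigen_coord n U (\<lambda>v. Z' v i)" if "i < d" for i
    unfolding eigen_coord_def using assms that by (intro ext sum.cong) auto
  then show "eigen_energy n d U \<mu> Z = eigen_energy n d U \<mu> Z'"
    and "eigen_norm2 n d U Z = eigen_norm2 n d U Z'"
    unfolding eigen_energy_def eigen_norm2_def by (auto intro!: sum.cong)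
qed

lemma eigen_energy_eigen_combination:
  assumes U: "orthogonal_matrix n U" and T: "T \<subseteq> {..<n}" "\<forall>t\<in>T. \<mu> t = e"
    and X: "X = (\<lambda>v l. \<Sum>t\<in>T. \<alpha> (t,l) * of_real (U $$ (v,t)))"
  shows "eigen_energy n d U \<mu> X = e * eigen_norm2 n d U X"
    and "\<exists>x\<in>T \<times> {..<d}. \<alpha> x \<noteq> 0 \<Longrightarrow> eigen_norm2 n d U X > 0"
proof -
  have coord: "eigen_coord n U (\<lambda>v. X v i) k = (if k \<in> T then \<alpha> (k,i) else 0)" if "k < n" for i k
    unfolding X using eigen_coord_eigen_combination[OF U T(1) that, of "\<lambda>t. \<alpha> (t,i)"] by simp
  then have "\<mu> k * (cmod (eigen_coord n U (\<lambda>v. X v i) k))\<^sup>2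
      = e * (cmod (eigen_coord n U (\<lambda>v. X v i) k))\<^sup>2" if "k < n" for i k
    using T(2) that by (cases "k \<in> T") auto
  then show "eigen_energy n d U \<mu> X = e * eigen_norm2 n d U X"
    unfolding eigen_energy_def eigen_norm2_def sum_distrib_left by (intro sum.cong refl) auto
  assume "\<exists>x\<in>T \<times> {..<d}. \<alpha> x \<noteq> 0"
  then obtain t l where tl: "t \<in> T" "l < d" "\<alpha> (t,l) \<noteq> 0" by auto
  have "t < n" using tl(1) T(1) by auto
  have pos: "(\<Sum>k<n. (cmod (eigen_coord n U (\<lambda>v. X v l) k))\<^sup>2) > 0"
    by (rule sum_pos2[of _ t]) (use tl \<open>t < n\<close> coord[of t l] in auto)
  show "eigen_norm2 n d U X > 0"
    unfolding eigen_norm2_def by (rule sum_pos2[of _ l]) (use tl(2) pos in \<open>auto intro: sum_nonneg\<close>)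
qed

lemma eigen_energy_le_second_eigenvalue:
  assumes second: "\<forall>k<n. 0 < k \<longrightarrow> \<mu> k \<le> \<mu> 1"
    and orth: "\<forall>i<d. eigen_coord n U (\<lambda>v. Z v i) 0 = 0"
  shows "eigen_energy n d U \<mu> Z \<le> \<mu> 1 * eigen_norm2 n d U Z"
  unfolding eigen_energy_def eigen_norm2_def sum_distrib_left
proof (intro sum_mono)
  fix i k assume "i \<in> {..<d}" "k \<in> {..<n}"
  then show "\<mu> k * (cmod (eigen_coord n U (\<lambda>v. Z v i) k))\<^sup>2
      \<le> \<mu> 1 * (cmod (eigen_coord n U (\<lambda>v. Z v i) k))\<^sup>2"
    using orth second by (cases "k = 0") (auto simp: mult_right_mono)
qed

text \<open>The basis vector e_j has Rayleigh quotient M j j = 0.\<close>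
lemma lower_eigenvalue_bound_nonpos:
  fixes M :: "nat \<Rightarrow> nat \<Rightarrow> real"
  assumes U: "orthogonal_matrix n U"
    and spec: "\<forall>v<n. \<forall>w<n. M v w = (\<Sum>k<n. U $$ (v,k) * \<mu> k * U $$ (w,k))"
    and "j < n" "M j j = 0" and lower: "\<forall>k<n. m \<le> \<mu> k"
  shows "m \<le> 0"
proof -
  have "m = (\<Sum>k<n. m * (U $$ (j,k) * U $$ (j,k)))"
    using orthogonal_matrix_entries(2)[OF U \<open>j < n\<close> \<open>j < n\<close>] by (simp add: sum_distrib_left[symmetric])
  also have "\<dots> \<le> (\<Sum>k<n. U $$ (j,k) * \<mu> k * U $$ (j,k))"
    using lower by (intro sum_mono) (simp add: mult_right_mono mult_ac)
  also have "\<dots> = 0" using spec assms(3,4) by simp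
  finally show ?thesis .
qed

section \<open>Fourier transform of a quantum colouring\<close>

definition dft_entry :: "nat \<Rightarrow> nat \<Rightarrow> nat \<Rightarrow> complex" where
  "dft_entry c j k = cis (2 * pi * real j * real k / real c)"

lemma dft_orthogonality:
  assumes k: "k < c" and k': "k' < c"
  shows "(\<Sum>j<c. cnj (dft_entry c j k) * dft_entry c j k') = (if k = k' then of_nat c else 0)"
proof -
  have c: "real c > 0" using k by simp
  define \<theta> where "\<theta> = 2 * pi * (real k' - real k) / real c"
  define z where "z = cis \<theta>"
  have "cnj (dft_entry c j k) * dft_entry c j k' = z ^ j" for j
  proof -
    have "cnj (dft_entry c j k) * dft_entry c j k'
        = cis (- (2 * pi * real j * real k / real c) + 2 * pi * real j * real k' / real c)"
      by (simp add: dft_entry_def cis_cnj cis_mult)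
    also have "- (2 * pi * real j * real k / real c) + 2 * pi * real j * real k' / real c = real j * \<theta>"
      unfolding \<theta>_def using c by (simp add: field_simps)
    finally show ?thesis by (simp add: z_def DeMoivre)
  qed
  then have sum_eq: "(\<Sum>j<c. cnj (dft_entry c j k) * dft_entry c j k') = (\<Sum>j<c. z ^ j)"
    by simp
  show ?thesis
  proof (cases "k = k'")
    case True
    then have "z = 1" by (simp add: z_def \<theta>_def)
    then show ?thesis using sum_eq True by simp
  next
    case False
    have "z ^ c = cis (2 * pi * (real k' - real k))"
      using c by (simp add: z_def \<theta>_def DeMoivre)
    also have "\<dots> = 1" by (rule cis_multiple_2pi) simp
    finally have "z ^ c = 1" .
    moreover have "z \<noteq> 1"
    proof
      assume "z = 1"
      then have "cos \<theta> = 1" by (simp add: z_def complex_eq_iff)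
      then obtain m :: int where "\<theta> = of_int m * 2 * pi" by (auto simp: cos_one_2pi_int)
      then have "2 * pi * ((real k' - real k) / real c) = 2 * pi * real_of_int m"
        by (simp add: \<theta>_def)
      then have "(real k' - real k) / real c = real_of_int m"
        by (rule mult_left_cancel[THEN iffD1, rotated]) simp
      then have "real_of_int (int k' - int k) = real_of_int (int c * m)"
        using c by (simp add: field_simps)
      then have "int c dvd int k' - int k" by (simp only: of_int_eq_iff) simp
      moreover have "int k' - int k \<noteq> 0" using False by simp
      ultimately have "\<bar>int c\<bar> \<le> \<bar>int k' - int k\<bar>" by (rule dvd_imp_le_int[rotated])
      then show False using k k' by linarith
    qed
    ultimately have "(\<Sum>j<c. z ^ j) = 0" by (simp add: sum_gp_strict)
    then show ?thesis using False sum_eq by simp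
  qed
qed

lemma orth_projector_cnj_entry:
  assumes "orth_projector d P" "i < d" "l < d"
  shows "cnj (P $$ (i,l)) = P $$ (l,i)"
proof -
  have P: "P \<in> carrier_mat d d" "mat_adjoint P = P"
    using assms(1) by (auto simp: orth_projector_def)
  have "mat_adjoint P $$ (l,i) = cnj (P $$ (i,l))"
    using P(1) assms(2,3) unfolding mat_adjoint_def by (simp add: mat_of_rows_def)
  then show ?thesis using P(2) by simp
qed

lemma cnj_sum_mult_sum:
  fixes a b :: "'x \<Rightarrow> complex"
  shows "cnj (\<Sum>k\<in>A. a k) * (\<Sum>l\<in>B. b l) = (\<Sum>k\<in>A. \<Sum>l\<in>B. cnj (a k) * b l)"
  by (simp add: cnj_sum sum_product)

lemma sum_swap4:
  "(\<Sum>a\<in>A. \<Sum>b\<in>B. \<Sum>c\<in>C. \<Sum>d\<in>D. f a b c d) = (\<Sum>c\<in>C. \<Sum>d\<in>D. \<Sum>a\<in>A. \<Sum>b\<in>B. f a b c d)"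
proof -
  have "(\<Sum>a\<in>A. \<Sum>b\<in>B. \<Sum>c\<in>C. \<Sum>d\<in>D. f a b c d) = (\<Sum>a\<in>A. \<Sum>c\<in>C. \<Sum>b\<in>B. \<Sum>d\<in>D. f a b c d)"
    by (rule sum.cong[OF refl], rule sum.swap)
  also have "\<dots> = (\<Sum>c\<in>C. \<Sum>a\<in>A. \<Sum>d\<in>D. \<Sum>b\<in>B. f a b c d)"
    by (subst sum.swap) (intro sum.cong refl, rule sum.swap)
  also have "\<dots> = (\<Sum>c\<in>C. \<Sum>d\<in>D. \<Sum>a\<in>A. \<Sum>b\<in>B. f a b c d)"
    by (intro sum.cong refl, rule sum.swap)
  finally show ?thesis .
qed

text \<open>Entry (i,l) of the unitary S_j = \<Sum>k \<omega>^(jk) Q_k built from a resolution of the identity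
  Q_0, ..., Q_(c-1) into projectors, where \<omega> is a primitive c-th root of unity.\<close>
definition dft_proj :: "nat \<Rightarrow> (nat \<Rightarrow> complex mat) \<Rightarrow> nat \<Rightarrow> nat \<Rightarrow> nat \<Rightarrow> complex" where
  "dft_proj c Q j i l = (\<Sum>k<c. dft_entry c j k * Q k $$ (i,l))"

lemma dft_proj_gram:
  assumes Q: "\<And>k. k < c \<Longrightarrow> orth_projector d (Q k)"
    and R: "\<And>k. k < c \<Longrightarrow> R k \<in> carrier_mat d d" and "l < d" "m < d"
  shows "(\<Sum>j<c. \<Sum>i<d. cnj (dft_proj c Q j i l) * dft_proj c R j i m)
    = of_nat c * (\<Sum>k<c. (Q k * R k) $$ (l,m))"
proof -
  have "(\<Sum>j<c. \<Sum>i<d. cnj (dft_proj c Q j i l) * dft_proj c R j i m)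
      = (\<Sum>j<c. \<Sum>i<d. \<Sum>k<c. \<Sum>k'<c.
          (cnj (dft_entry c j k) * dft_entry c j k') * (cnj (Q k $$ (i,l)) * R k' $$ (i,m)))"
    unfolding dft_proj_def
    by (intro sum.cong refl, subst cnj_sum_mult_sum, intro sum.cong refl) (simp add: mult_ac)
  also have "\<dots> = (\<Sum>k<c. \<Sum>k'<c. (\<Sum>j<c. cnj (dft_entry c j k) * dft_entry c j k')
      * (\<Sum>i<d. cnj (Q k $$ (i,l)) * R k' $$ (i,m)))"
    by (simp add: sum_swap4[of _ "{..<c}"] sum_product)
  also have "\<dots> = (\<Sum>k<c. \<Sum>k'<c. if k = k' then of_nat c * (Q k * R k) $$ (l,m) else 0)"
  proof (intro sum.cong refl)
    fix k k' assume "k \<in> {..<c}" "k' \<in> {..<c}"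
    moreover have "(\<Sum>i<d. cnj (Q k $$ (i,l)) * R k $$ (i,m)) = (Q k * R k) $$ (l,m)"
      if "k < c" for k
    proof -
      have "(\<Sum>i<d. cnj (Q k $$ (i,l)) * R k $$ (i,m)) = (\<Sum>i<d. Q k $$ (l,i) * R k $$ (i,m))"
        using orth_projector_cnj_entry[OF Q[OF that]] \<open>l < d\<close> by (intro sum.cong refl) simp
      also have "\<dots> = (Q k * R k) $$ (l,m)"
        using Q[OF that] R[OF that] \<open>l < d\<close> \<open>m < d\<close>
        by (simp add: index_mult_mat_sum[of _ d d _ d] orth_projector_def)
      finally show ?thesis .
    qed
    ultimately show "(\<Sum>j<c. cnj (dft_entry c j k) * dft_entry c j k')
        * (\<Sum>i<d. cnj (Q k $$ (i,l)) * R k' $$ (i,m))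
        = (if k = k' then of_nat c * (Q k * R k) $$ (l,m) else 0)"
      by (simp add: dft_orthogonality)
  qed
  also have "\<dots> = of_nat c * (\<Sum>k<c. (Q k * R k) $$ (l,m))"
    by (simp add: sum_distrib_left)
  finally show ?thesis .
qed

definition twist ::
  "nat \<Rightarrow> nat \<Rightarrow> (nat \<Rightarrow> nat \<Rightarrow> complex mat) \<Rightarrow> (nat \<Rightarrow> nat \<Rightarrow> complex) \<Rightarrow> nat \<Rightarrow> nat \<Rightarrow> nat \<Rightarrow> complex"
  where "twist c d P X j v i = (\<Sum>l<d. dft_proj c (P v) j i l * X v l)"

lemma quantum_coloringD:
  assumes "quantum_coloring n E c d P" "v < n" "k < c"
  shows "orth_projector d (P v k)" "P v k \<in> carrier_mat d d" "P v k * P v k = P v k"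
  using assms by (auto simp: quantum_coloring_def orth_projector_def)

lemma twist_gram:
  assumes col: "quantum_coloring n E c d P" and "v < n" "w < n"
  shows "(\<Sum>j<c. \<Sum>i<d. cnj (twist c d P X j v i) * twist c d P X j w i)
    = of_nat c * (\<Sum>l<d. \<Sum>m<d. cnj (X v l) * X w m * (\<Sum>k<c. (P v k * P w k) $$ (l,m)))"
proof -
  have "(\<Sum>j<c. \<Sum>i<d. cnj (twist c d P X j v i) * twist c d P X j w i)
      = (\<Sum>j<c. \<Sum>i<d. \<Sum>l<d. \<Sum>m<d.
          (cnj (X v l) * X w m) * (cnj (dft_proj c (P v) j i l) * dft_proj c (P w) j i m))"
    unfolding twist_def
    by (intro sum.cong refl, subst cnj_sum_mult_sum, intro sum.cong refl) (simp add: mult_ac)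
  also have "\<dots> = (\<Sum>l<d. \<Sum>m<d. (cnj (X v l) * X w m)
      * (\<Sum>j<c. \<Sum>i<d. cnj (dft_proj c (P v) j i l) * dft_proj c (P w) j i m))"
    by (subst sum_swap4) (simp add: sum_distrib_left)
  also have "\<dots> = (\<Sum>l<d. \<Sum>m<d. (cnj (X v l) * X w m)
      * (of_nat c * (\<Sum>k<c. (P v k * P w k) $$ (l,m))))"
  proof (intro sum.cong refl)
    fix l m assume "l \<in> {..<d}" "m \<in> {..<d}"
    then show "(cnj (X v l) * X w m)
        * (\<Sum>j<c. \<Sum>i<d. cnj (dft_proj c (P v) j i l) * dft_proj c (P w) j i m)
      = (cnj (X v l) * X w m) * (of_nat c * (\<Sum>k<c. (P v k * P w k) $$ (l,m)))"
      using quantum_coloringD[OF col] assms(2,3) by (subst dft_proj_gram) auto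
  qed
  also have "\<dots> = of_nat c * (\<Sum>l<d. \<Sum>m<d. cnj (X v l) * X w m * (\<Sum>k<c. (P v k * P w k) $$ (l,m)))"
    by (simp add: sum_distrib_left mult_ac)
  finally show ?thesis .
qed

lemma twist_adjacent:
  assumes col: "quantum_coloring n E c d P" and "v < n" "w < n" "E v w"
  shows "(\<Sum>j<c. \<Sum>i<d. cnj (twist c d P X j v i) * twist c d P X j w i) = 0"
proof -
  have "(P v k * P w k) $$ (l,m) = 0" if "k < c" "l < d" "m < d" for k l m
    using col assms(4) that unfolding quantum_coloring_def by simp
  then show ?thesis using twist_gram[OF assms(1-3)] by simp
qed

lemma twist_norm:
  assumes col: "quantum_coloring n E c d P" and v: "v < n"
  shows "(\<Sum>j<c. \<Sum>i<d. cnj (twist c d P X j v i) * twist c d P X j v i)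
    = of_nat c * (\<Sum>l<d. cnj (X v l) * X v l)"
proof -
  have "(\<Sum>k<c. (P v k * P v k) $$ (l,m)) = (if l = m then 1 else 0)" if "l < d" "m < d" for l m
    using col v that quantum_coloringD(3)[OF col v] unfolding quantum_coloring_def by simp
  then have "(\<Sum>m<d. cnj (X v l) * X v m * (\<Sum>k<c. (P v k * P v k) $$ (l,m)))
      = (\<Sum>m<d. if l = m then cnj (X v l) * X v m else 0)" if "l < d" for l
    using that by (intro sum.cong refl) auto
  then show ?thesis using twist_gram[OF col v v] by simp
qed

lemma twist_zero:
  assumes col: "quantum_coloring n E c d P" and "v < n" "i < d"
  shows "twist c d P X 0 v i = X v i"
proof -
  have "dft_proj c (P v) 0 i l = (if i = l then 1 else 0)" if "l < d" for l
    using col assms(2,3) that unfolding quantum_coloring_def by (simp add: dft_proj_def dft_entry_def)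
  then have "twist c d P X 0 v i = (\<Sum>l<d. if i = l then X v l else 0)"
    unfolding twist_def by (intro sum.cong refl) auto
  then show ?thesis using assms(3) by simp
qed

section \<open>The spectral bound\<close>

lemma twisted_energy_identities:
  fixes X :: "nat \<Rightarrow> nat \<Rightarrow> complex"
  assumes col: "quantum_coloring n E c d P" and U: "orthogonal_matrix n U"
    and spec: "\<forall>v<n. \<forall>w<n. adj_matrix n E $$ (v,w) = (\<Sum>k<n. U $$ (v,k) * \<mu> k * U $$ (w,k))"
  defines "Y \<equiv> twist c d P X"
  shows "(\<Sum>j<c. eigen_energy n d U \<mu> (Y j)) = 0"
    and "(\<Sum>j<c. eigen_norm2 n d U (Y j)) = real c * eigen_norm2 n d U X"
proof -
  let ?A = "\<lambda>v w. adj_matrix n E $$ (v,w)"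
  have "complex_of_real (\<Sum>j<c. \<Sum>i<d. \<Sum>k<n. \<mu> k * (cmod (eigen_coord n U (\<lambda>v. Y j v i) k))\<^sup>2)
      = (\<Sum>j<c. \<Sum>i<d. \<Sum>v<n. \<Sum>w<n. of_real (?A v w) * (cnj (Y j v i) * Y j w i))"
    by (simp add: of_real_sum quadratic_form_eigen_expansion[OF spec])
  also have "\<dots> = (\<Sum>v<n. \<Sum>w<n. of_real (?A v w) * (\<Sum>j<c. \<Sum>i<d. cnj (Y j v i) * Y j w i))"
    by (subst sum_swap4) (simp add: sum_distrib_left)
  also have "\<dots> = 0"
    using twist_adjacent[OF col] by (intro sum.neutral ballI) (simp add: Y_def adj_matrix_def)
  finally show "(\<Sum>j<c. eigen_energy n d U \<mu> (Y j)) = 0"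
    by (simp only: of_real_eq_0_iff eigen_energy_def)
  have "complex_of_real (\<Sum>j<c. \<Sum>i<d. \<Sum>k<n. (cmod (eigen_coord n U (\<lambda>v. Y j v i) k))\<^sup>2)
      = (\<Sum>j<c. \<Sum>i<d. \<Sum>v<n. cnj (Y j v i) * Y j v i)"
    by (simp add: of_real_sum norm_eigen_expansion[OF U])
  also have "\<dots> = (\<Sum>j<c. \<Sum>v<n. \<Sum>i<d. cnj (Y j v i) * Y j v i)"
    by (rule sum.cong[OF refl], rule sum.swap)
  also have "\<dots> = (\<Sum>v<n. \<Sum>j<c. \<Sum>i<d. cnj (Y j v i) * Y j v i)"
    by (rule sum.swap)
  also have "\<dots> = (\<Sum>v<n. of_nat c * (\<Sum>i<d. cnj (X v i) * X v i))"
    using twist_norm[OF col] by (simp add: Y_def)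
  also have "\<dots> = of_nat c * (\<Sum>i<d. \<Sum>v<n. cnj (X v i) * X v i)"
    by (simp only: sum_distrib_left[symmetric] sum.swap[where A = "{..<n}" and B = "{..<d}"])
  also have "\<dots> = complex_of_real (real c * (\<Sum>i<d. \<Sum>k<n. (cmod (eigen_coord n U (\<lambda>v. X v i) k))\<^sup>2))"
    by (simp add: of_real_sum norm_eigen_expansion[OF U])
  finally show "(\<Sum>j<c. eigen_norm2 n d U (Y j)) = real c * eigen_norm2 n d U X"
    by (simp only: of_real_eq_iff eigen_norm2_def)
qed

text \<open>There are (c - 1) d linear conditions on card T * d unknowns.\<close>
lemma eigenspace_vector_with_twists_orthogonal:
  assumes T: "T \<subseteq> {..<n}" and card: "c - 1 < card T" and "d > 0"
  obtains \<alpha> :: "nat \<times> nat \<Rightarrow> complex" where "\<exists>x\<in>T \<times> {..<d}. \<alpha> x \<noteq> 0"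
    and "\<And>j i. j \<in> {1..<c} \<Longrightarrow> i < d \<Longrightarrow>
      eigen_coord n U (\<lambda>v. twist c d P (\<lambda>v l. \<Sum>t\<in>T. \<alpha> (t,l) * of_real (U $$ (v,t))) j v i) 0 = 0"
proof -
  define I where "I = T \<times> {..<d}"
  define M where "M = (\<lambda>(j,i) (t,l).
    \<Sum>v<n. of_real (U $$ (v,0)) * dft_proj c (P v) j i l * of_real (U $$ (v,t)) :: complex)"
  have linear: "eigen_coord n U (\<lambda>v. twist c d P (\<lambda>v l. \<Sum>t\<in>T. \<alpha> (t,l) * of_real (U $$ (v,t))) j v i) 0
      = (\<Sum>x\<in>I. M (j,i) x * \<alpha> x)" for \<alpha> j i
  proof -
    have "eigen_coord n U (\<lambda>v. twist c d P (\<lambda>v l. \<Sum>t\<in>T. \<alpha> (t,l) * of_real (U $$ (v,t))) j v i) 0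
      = (\<Sum>v<n. \<Sum>l<d. \<Sum>t\<in>T. (of_real (U $$ (v,0)) * dft_proj c (P v) j i l
          * of_real (U $$ (v,t))) * \<alpha> (t,l))"
      unfolding eigen_coord_def twist_def by (simp add: sum_distrib_left mult_ac)
    also have "\<dots> = (\<Sum>l<d. \<Sum>v<n. \<Sum>t\<in>T. (of_real (U $$ (v,0)) * dft_proj c (P v) j i l
          * of_real (U $$ (v,t))) * \<alpha> (t,l))"
      by (rule sum.swap)
    also have "\<dots> = (\<Sum>l<d. \<Sum>t\<in>T. \<Sum>v<n. (of_real (U $$ (v,0)) * dft_proj c (P v) j i l
          * of_real (U $$ (v,t))) * \<alpha> (t,l))"
      by (rule sum.cong[OF refl], rule sum.swap)
    also have "\<dots> = (\<Sum>t\<in>T. \<Sum>l<d. \<Sum>v<n. (of_real (U $$ (v,0)) * dft_proj c (P v) j i l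
          * of_real (U $$ (v,t))) * \<alpha> (t,l))"
      by (rule sum.swap)
    also have "\<dots> = (\<Sum>t\<in>T. \<Sum>l<d. M (j,i) (t,l) * \<alpha> (t,l))"
      unfolding M_def by (simp add: sum_distrib_right)
    also have "\<dots> = (\<Sum>x\<in>I. M (j,i) x * \<alpha> x)"
      unfolding I_def by (simp add: sum.cartesian_product)
    finally show ?thesis .
  qed
  have "card ({1..<c} \<times> {..<d}) < card I"
    using card \<open>d > 0\<close> by (simp add: I_def card_cartesian_product)
  moreover have "finite I" using T finite_subset by (auto simp: I_def)
  ultimately obtain \<alpha> where "\<exists>x\<in>I. \<alpha> x \<noteq> 0" "\<forall>y\<in>{1..<c} \<times> {..<d}. (\<Sum>x\<in>I. M y x * \<alpha> x) = 0"
    using homogeneous_system_nontrivial_solution[of I "{1..<c} \<times> {..<d}" M] by auto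
  then show thesis using that[of \<alpha>] linear unfolding I_def by auto
qed

theorem quantum_hoffman_bound:
  assumes col: "quantum_coloring n E c d P" and "c > 0" "d > 0"
    and U: "orthogonal_matrix n U"
    and spec: "\<forall>v<n. \<forall>w<n. adj_matrix n E $$ (v,w) = (\<Sum>k<n. U $$ (v,k) * \<mu> k * U $$ (w,k))"
    and second: "\<forall>k<n. 0 < k \<longrightarrow> \<mu> k \<le> \<mu> 1"
    and T: "T \<subseteq> {..<n}" "\<forall>t\<in>T. \<mu> t = e" and card: "c - 1 < card T"
  shows "- e \<le> real (c - 1) * \<mu> 1"
proof -
  obtain \<alpha> where \<alpha>: "\<exists>x\<in>T \<times> {..<d}. \<alpha> x \<noteq> 0"
    and orth: "\<And>j i. j \<in> {1..<c} \<Longrightarrow> i < d \<Longrightarrow>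
      eigen_coord n U (\<lambda>v. twist c d P (\<lambda>v l. \<Sum>t\<in>T. \<alpha> (t,l) * of_real (U $$ (v,t))) j v i) 0 = 0"
    using eigenspace_vector_with_twists_orthogonal[where U = U and P = P, OF T(1) card \<open>d > 0\<close>]
    by blast
  define X where "X = (\<lambda>v l. \<Sum>t\<in>T. \<alpha> (t,l) * of_real (U $$ (v,t)))"
  define Y where "Y = twist c d P X"
  let ?energy = "eigen_energy n d U \<mu>" and ?norm2 = "eigen_norm2 n d U"
  have energy_X: "?energy X = e * ?norm2 X" and norm_X: "?norm2 X > 0"
    using eigen_energy_eigen_combination[OF U T X_def] \<alpha> by auto
  have Y_0: "?energy (Y 0) = ?energy X" "?norm2 (Y 0) = ?norm2 X"
    using eigen_energy_norm2_cong[of n d "Y 0" X] twist_zero[OF col] by (simp_all add: Y_def)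
  have "(\<Sum>j\<in>{1..<c}. ?energy (Y j)) \<le> (\<Sum>j\<in>{1..<c}. \<mu> 1 * ?norm2 (Y j))"
    using eigen_energy_le_second_eigenvalue[OF second] orth by (intro sum_mono) (simp add: Y_def X_def)
  moreover have split: "(\<Sum>j<c. f j) = f 0 + (\<Sum>j\<in>{1..<c}. f j)" for f :: "nat \<Rightarrow> real"
    using \<open>c > 0\<close> by (simp add: atLeast0LessThan[symmetric] sum.atLeast_Suc_lessThan)
  then have "?energy X + (\<Sum>j\<in>{1..<c}. ?energy (Y j)) = 0"
    "(\<Sum>j\<in>{1..<c}. ?norm2 (Y j)) = real (c - 1) * ?norm2 X"
    using twisted_energy_identities[OF col U spec, of X] Y_0 \<open>c > 0\<close>
    by (simp_all add: Y_def of_nat_diff algebra_simps)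
  ultimately have "0 \<le> e * ?norm2 X + \<mu> 1 * (real (c - 1) * ?norm2 X)"
    using energy_X by (simp add: sum_distrib_left[symmetric])
  then have "- e * ?norm2 X \<le> (real (c - 1) * \<mu> 1) * ?norm2 X"
    by (simp add: algebra_simps)
  then show ?thesis using norm_X by (rule mult_right_le_imp_le)
qed

section \<open>Adjacency matrices\<close>

lemma adj_matrix_carrier: "adj_matrix n E \<in> carrier_mat n n"
  by (simp add: adj_matrix_def)

lemma adj_matrix_symmetric:
  assumes "simple_graph n E"
  shows "transpose_mat (adj_matrix n E) = adj_matrix n E"
  using assms by (intro eq_matI) (auto simp: adj_matrix_def simple_graph_def)

lemma quantum_colorable_by_vertices:
  assumes "simple_graph n E"
  shows "quantum_colorable n E n"
proof -
  define P :: "nat \<Rightarrow> nat \<Rightarrow> complex mat" where "P = (\<lambda>v k. mat 1 1 (\<lambda>_. if k = v then 1 else 0))"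
  have "orth_projector 1 (P v k)" for v k
    unfolding orth_projector_def
    by (auto intro!: eq_matI simp: P_def scalar_prod_def mat_adjoint_def mat_of_rows_def)
  moreover have "P v k * P w k = 0\<^sub>m 1 1" if "E v w" for v w k
  proof -
    have "v \<noteq> w" using that assms unfolding simple_graph_def by auto
    then show ?thesis by (intro eq_matI) (auto simp: P_def scalar_prod_def)
  qed
  ultimately have "quantum_coloring n E n 1 P"
    unfolding quantum_coloring_def by (auto simp: P_def sum.delta')
  then show ?thesis unfolding quantum_colorable_def by blast
qed

lemma quantum_colorable_chromatic_number:
  assumes "simple_graph n E"
  shows "quantum_colorable n E (quantum_chromatic_number n E)"
  unfolding quantum_chromatic_number_def using quantum_colorable_by_vertices[OF assms] by (rule LeastI)

lemma quantum_coloring_colors_pos: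
  assumes "quantum_coloring n E c d P" "0 < n" "0 < d"
  shows "0 < c"
proof -
  have "(\<Sum>k<c. P 0 k $$ (0,0)) = 1" using assms unfolding quantum_coloring_def by auto
  then show ?thesis by (metis gr0I lessThan_0 sum.empty zero_neq_one)
qed

lemma sorted_wrt_ge_nth_mono:
  fixes xs :: "'a::order list"
  assumes "sorted_wrt (\<ge>) xs" "i \<le> j" "j < length xs"
  shows "xs ! j \<le> xs ! i"
  using assms sorted_wrt_nth_less[OF assms(1), of i j] by (cases "i = j") auto

lemma count_list_conv_card:
  "count_list xs x = card {k. k < length xs \<and> xs ! k = x}"
  by (simp add: count_list_eq_length_filter length_filter_conv_card eq_commute)

lemma adj_matrix_eigenvalue_list_length:
  assumes "simple_graph n E"
  shows "length (eigenvalue_list (adj_matrix n E)) = n"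
  using symmetric_eigenvalue_list(1)[OF adj_matrix_carrier adj_matrix_symmetric[OF assms]] .

lemma adj_matrix_eigenvalues_sorted:
  assumes "simple_graph n E" "i \<le> j" "j < n"
  shows "eigenvalue_list (adj_matrix n E) ! j \<le> eigenvalue_list (adj_matrix n E) ! i"
  using sorted_wrt_ge_nth_mono[OF symmetric_eigenvalue_list(2)[OF adj_matrix_carrier
      adj_matrix_symmetric[OF assms(1)]] assms(2)] adj_matrix_eigenvalue_list_length[OF assms(1)] assms(3)
  by simp

lemma adj_matrix_spectral_decomposition:
  assumes "simple_graph n E"
  obtains U where "orthogonal_matrix n U"
    "\<forall>v<n. \<forall>w<n. adj_matrix n E $$ (v,w)
      = (\<Sum>k<n. U $$ (v,k) * eigenvalue_list (adj_matrix n E) ! k * U $$ (w,k))"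
  using symmetric_eigenvalue_list(3)[OF adj_matrix_carrier adj_matrix_symmetric[OF assms]] by blast

lemma adj_matrix_least_eigenvalue_nonpos:
  assumes "simple_graph n E" "0 < n"
  shows "eigenvalue_list (adj_matrix n E) ! (n - 1) \<le> 0"
proof -
  obtain U where U: "orthogonal_matrix n U" and spec: "\<forall>v<n. \<forall>w<n. adj_matrix n E $$ (v,w)
      = (\<Sum>k<n. U $$ (v,k) * eigenvalue_list (adj_matrix n E) ! k * U $$ (w,k))"
    by (rule adj_matrix_spectral_decomposition[OF assms(1)])
  have no_loop: "adj_matrix n E $$ (0,0) = 0"
    using assms by (simp add: adj_matrix_def simple_graph_def)
  have "\<forall>k<n. eigenvalue_list (adj_matrix n E) ! (n - 1) \<le> eigenvalue_list (adj_matrix n E) ! k"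
    using adj_matrix_eigenvalues_sorted[OF assms(1)] by auto
  then show ?thesis
    using assms(2) by (intro lower_eigenvalue_bound_nonpos[OF U spec _ no_loop]) auto
qed

corollary quantum_coloring_spectral_bound:
  assumes col: "quantum_coloring n E c d P" and "0 < c" "0 < d"
    and U: "orthogonal_matrix n U"
    and spec: "\<forall>v<n. \<forall>w<n. adj_matrix n E $$ (v,w) = (\<Sum>k<n. U $$ (v,k) * \<mu> k * U $$ (w,k))"
    and sorted: "\<And>i j. i \<le> j \<Longrightarrow> j < n \<Longrightarrow> \<mu> j \<le> \<mu> i"
    and "0 < \<mu> 1" "\<mu> (n - 1) \<le> 0"
  shows "real c \<ge> 1 + min (real (card {k. k < n \<and> \<mu> k = \<mu> (n - 1)})) (\<bar>\<mu> (n - 1)\<bar> / \<mu> 1)"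
proof (cases "card {k. k < n \<and> \<mu> k = \<mu> (n - 1)} \<le> c - 1")
  case True
  then show ?thesis using \<open>0 < c\<close> by linarith
next
  case False
  have "\<forall>k<n. 0 < k \<longrightarrow> \<mu> k \<le> \<mu> 1" using sorted by auto
  then have "- \<mu> (n - 1) \<le> real (c - 1) * \<mu> 1"
    using False
    by (intro quantum_hoffman_bound[where T = "{k. k < n \<and> \<mu> k = \<mu> (n - 1)}", OF col \<open>0 < c\<close>
          \<open>0 < d\<close> U spec]) auto
  then have "- \<mu> (n - 1) / \<mu> 1 \<le> real (c - 1)"
    using \<open>0 < \<mu> 1\<close> by (subst pos_divide_le_eq) auto
  then have "\<bar>\<mu> (n - 1)\<bar> / \<mu> 1 \<le> real (c - 1)"
    using \<open>\<mu> (n - 1) \<le> 0\<close> by (simp only: abs_of_nonpos)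
  then show ?thesis using \<open>0 < c\<close> by (simp add: of_nat_diff)
qed

theorem theorem3:
  fixes n :: nat and E :: "nat \<Rightarrow> nat \<Rightarrow> bool"
  assumes "n \<ge> 2" and "simple_graph n E" and "connected_graph n E"
    and "eigenvalue_list (adj_matrix n E) ! 1 > 0"
  shows "real (quantum_chromatic_number n E) \<ge>
     1 + min (real (count_list (eigenvalue_list (adj_matrix n E))
                                 (eigenvalue_list (adj_matrix n E) ! (n - 1))))
             (\<bar>eigenvalue_list (adj_matrix n E) ! (n - 1)\<bar> / eigenvalue_list (adj_matrix n E) ! 1)"
proof -
  define \<mu> where "\<mu> = (!) (eigenvalue_list (adj_matrix n E))"
  define c where "c = quantum_chromatic_number n E"
  obtain U where U: "orthogonal_matrix n U"
    and spec: "\<forall>v<n. \<forall>w<n. adj_matrix n E $$ (v,w) = (\<Sum>k<n. U $$ (v,k) * \<mu> k * U $$ (w,k))"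
    unfolding \<mu>_def by (rule adj_matrix_spectral_decomposition[OF assms(2)])
  obtain d P where "0 < d" and col: "quantum_coloring n E c d P"
    using quantum_colorable_chromatic_number[OF assms(2)] by (auto simp: c_def quantum_colorable_def)
  then have "0 < c" using quantum_coloring_colors_pos assms(1) by simp
  have "real c \<ge> 1 + min (real (card {k. k < n \<and> \<mu> k = \<mu> (n - 1)})) (\<bar>\<mu> (n - 1)\<bar> / \<mu> 1)"
    using quantum_coloring_spectral_bound[OF col \<open>0 < c\<close> \<open>0 < d\<close> U spec]
      adj_matrix_eigenvalues_sorted[OF assms(2)] adj_matrix_least_eigenvalue_nonpos[OF assms(2)]
      assms(1,4)
    by (simp add: \<mu>_def)
  moreover have "count_list (eigenvalue_list (adj_matrix n E)) (\<mu> (n - 1))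
      = card {k. k < n \<and> \<mu> k = \<mu> (n - 1)}"
    by (simp add: count_list_conv_card adj_matrix_eigenvalue_list_length[OF assms(2)] \<mu>_def)
  ultimately show ?thesis by (simp add: c_def \<mu>_def)
qed

end
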